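(* Any DIR compatible dynamic pricing process $(\tau,T)$ with $P(\tau<\infty)<1$ is not optimal.
   Context: Standing assumptions: $\theta>0$, $\lambda>0$; $w_+,w_-:[0,1]\to[0,1]$ strictly increasing, thrice differentiable, $w_\pm(0)=0$, $w_\pm(1)=1$, $w_\pm'(0)>1$, $w_\pm'(1)>1$, $w_\pm'''>0$. A cumulative payment function is $T:\mathbb{R}^+\to\mathbb{R}^+$ of the form $T(t)=\int_0^tf(s)ds+\sum_i1_{t_i<t}T_i$, with $f\ge0$ integrable and $(t_i),(T_i)$ countable sequences of nonnegative numbers, $t_i$ increasing. A stopping time is a random variable $\tau\in[0,\infty]$ whose CDF is the sum of a nondecreasing nonnegative absolutely continuous function and a nondecreasing nonnegative jump function. A dynamic pricing process $(\tau,T)$ is DIR compatible if for every $s$ with $P(\tau>s)>0$, \[\theta\,w_+(P(\tau<\infty\mid\tau>s))-\lambda\int_0^\infty w_-\big(P(T(\tau)-T(s)>y\mid\tau>s)\big)dy\ge0.\] Its revenue is $\int_0^\infty P(T(\tau)>y)dy$; it is optimal if it maximizes revenue among DIR compatible processes. *)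

theory Defs
  imports "HOL-Probability.Probability"
begin

definition weighting :: "(real \<Rightarrow> real) \<Rightarrow> bool" where
  "weighting w \<longleftrightarrow>
     strict_mono_on {0..1} w \<and> (\<forall>x\<in>{0..1}. w x \<in> {0..1}) \<and> w 0 = 0 \<and> w 1 = 1 \<and>
     (\<exists>w1 w2 w3. (\<forall>x\<in>{0..1}.
          (w has_real_derivative w1 x) (at x within {0..1}) \<and>
          (w1 has_real_derivative w2 x) (at x within {0..1}) \<and>
          (w2 has_real_derivative w3 x) (at x within {0..1}) \<and> w3 x > 0)
        \<and> w1 0 > 1 \<and> w1 1 > 1)"

definition payment_fn :: "(real \<Rightarrow> real) \<Rightarrow> bool" where
  "payment_fn T \<longleftrightarrow>
     (\<exists>(f::real \<Rightarrow> real) (ts::nat \<Rightarrow> real) (Ts::nat \<Rightarrow> real).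
        (\<forall>s. f s \<ge> 0) \<and> set_integrable lborel {0..} f \<and>
        (\<forall>i. ts i \<ge> 0 \<and> Ts i \<ge> 0) \<and> mono ts \<and>
        (\<forall>t\<ge>0. summable (\<lambda>i. if ts i < t then Ts i else 0) \<and>
           T t = (LBINT s:{0..t}. f s) + (\<Sum>i. if ts i < t then Ts i else 0)))"

definition T_at :: "(real \<Rightarrow> real) \<Rightarrow> ennreal \<Rightarrow> ennreal" where
  "T_at T x = (if x = \<infinity> then (SUP t\<in>{0..}. ennreal (T t)) else ennreal (T (enn2real x)))"

definition abs_continuous_on :: "real set \<Rightarrow> (real \<Rightarrow> real) \<Rightarrow> bool" where
  "abs_continuous_on S F \<longleftrightarrow>
     (\<forall>\<epsilon>>0. \<exists>\<delta>>0. \<forall>(n::nat) (a::nat \<Rightarrow> real) (b::nat \<Rightarrow> real).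
        (\<forall>i<n. a i \<le> b i \<and> {a i..b i} \<subseteq> S) \<and>
        (\<forall>i<n. \<forall>j<n. i \<noteq> j \<longrightarrow> b i \<le> a j \<or> b j \<le> a i) \<and>
        (\<Sum>i<n. b i - a i) < \<delta> \<longrightarrow> (\<Sum>i<n. \<bar>F (b i) - F (a i)\<bar>) < \<epsilon>)"

definition jump_fn :: "(real \<Rightarrow> real) \<Rightarrow> bool" where
  "jump_fn J \<longleftrightarrow>
     (\<exists>(a::nat \<Rightarrow> real) (c::nat \<Rightarrow> real). (\<forall>i. c i \<ge> 0) \<and>
        (\<forall>t\<ge>0. summable (\<lambda>i. if a i \<le> t then c i else 0) \<and>
                J t = (\<Sum>i. if a i \<le> t then c i else 0)))"

text \<open>A stopping time tau in [0,\<infinity>] is represented by its law mu, a probability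
  measure on ennreal = [0,\<infinity>]; its CDF on [0,\<infinity>) is absolutely continuous part + jump part.\<close>
definition stopping_law :: "ennreal measure \<Rightarrow> bool" where
  "stopping_law \<mu> \<longleftrightarrow> prob_space \<mu> \<and> sets \<mu> = sets borel \<and>
     (\<exists>A J. mono_on {0..} A \<and> (\<forall>t\<ge>0. A t \<ge> 0) \<and> abs_continuous_on {0..} A \<and>
            mono_on {0..} J \<and> (\<forall>t\<ge>0. J t \<ge> 0) \<and> jump_fn J \<and>
            (\<forall>t\<ge>0. measure \<mu> {..ennreal t} = A t + J t))"

definition cond_prob :: "ennreal measure \<Rightarrow> ennreal set \<Rightarrow> real \<Rightarrow> real" where
  "cond_prob \<mu> E s = measure \<mu> (E \<inter> {ennreal s<..}) / measure \<mu> {ennreal s<..}"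

definition DIR_compatible ::
  "real \<Rightarrow> real \<Rightarrow> (real \<Rightarrow> real) \<Rightarrow> (real \<Rightarrow> real) \<Rightarrow> ennreal measure \<Rightarrow> (real \<Rightarrow> real) \<Rightarrow> bool" where
  "DIR_compatible \<theta> lam wp wm \<mu> T \<longleftrightarrow> stopping_law \<mu> \<and> payment_fn T \<and>
     (\<forall>s\<ge>0. measure \<mu> {ennreal s<..} > 0 \<longrightarrow>
        ennreal lam * (\<integral>\<^sup>+ y\<in>{0..}. ennreal (wm (cond_prob \<mu> {x. T_at T x - ennreal (T s) > ennreal y} s)) \<partial>lborel)
        \<le> ennreal (\<theta> * wp (cond_prob \<mu> {x. x < \<infinity>} s)))"

definition revenue :: "ennreal measure \<Rightarrow> (real \<Rightarrow> real) \<Rightarrow> ennreal" where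
  "revenue \<mu> T = (\<integral>\<^sup>+ y\<in>{0..}. emeasure \<mu> {x. T_at T x > ennreal y} \<partial>lborel)"

definition optimal ::
  "real \<Rightarrow> real \<Rightarrow> (real \<Rightarrow> real) \<Rightarrow> (real \<Rightarrow> real) \<Rightarrow> ennreal measure \<Rightarrow> (real \<Rightarrow> real) \<Rightarrow> bool" where
  "optimal \<theta> lam wp wm \<mu> T \<longleftrightarrow> DIR_compatible \<theta> lam wp wm \<mu> T \<and>
     (\<forall>\<mu>' T'. DIR_compatible \<theta> lam wp wm \<mu>' T' \<longrightarrow> revenue \<mu>' T' \<le> revenue \<mu> T)"

end

theory Submission
  imports Defs
begin

(* Suppose (\<tau>, T) is optimal and P(\<tau> = \<infinity>) > 0. The DIR constraint at s = 0, together with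
   w_-(p) \<ge> c p, makes the revenue finite, hence also the total payment T(\<infinity>). Let
   q = P(\<tau> < \<infinity> | \<tau> > 0) < 1 and \<epsilon> = \<theta> (1 - w_+(q)) / \<lambda>, and choose m with T(\<infinity>) < T(m) + \<epsilon>.
   Stopping at min(\<tau>, m) and charging \<epsilon> upfront gives a DIR compatible process: the gain term
   becomes \<theta> because the new stopping time is finite, the conditional payment increments after
   any s > 0 only shrink, and at s = 0 the extra loss is at most \<lambda> \<epsilon>, which is exactly the slack
   \<theta> (1 - w_+(q)) of the old constraint. The new process earns at least
   P(\<tau> = \<infinity>) (T(m) + \<epsilon> - T(\<infinity>)) > 0 more, contradicting optimality. *)

definition capped_law :: "ennreal measure \<Rightarrow> real \<Rightarrow> ennreal measure" where
  "capped_law \<mu> m = distr \<mu> borel (\<lambda>x. min x (ennreal m))"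

definition add_upfront :: "(real \<Rightarrow> real) \<Rightarrow> real \<Rightarrow> real \<Rightarrow> real" where
  "add_upfront T \<epsilon> t = T t + (if 0 < t then \<epsilon> else 0)"

definition weighted_loss_tail ::
  "(real \<Rightarrow> real) \<Rightarrow> ennreal measure \<Rightarrow> (real \<Rightarrow> real) \<Rightarrow> real \<Rightarrow> real \<Rightarrow> ennreal" where
  "weighted_loss_tail w \<mu> T s y = ennreal (w (cond_prob \<mu> {x. T_at T x - ennreal (T s) > ennreal y} s))"

lemma ennreal_less_diff_iff:
  assumes "0 \<le> a" "0 \<le> y"
  shows "ennreal y < X - ennreal a \<longleftrightarrow> ennreal (y + a) < X"
  using assms by (simp add: less_diff_eq_ennreal ennreal_plus)

lemma emeasure_lborel_Ici_infinite: "emeasure lborel {0::real..} = \<infinity>"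
proof (rule ccontr)
  assume "emeasure lborel {0::real..} \<noteq> \<infinity>"
  then obtain r where r: "emeasure lborel {0::real..} = ennreal r" "r \<ge> 0"
    by (metis ennreal_cases infinity_ennreal_def)
  have "emeasure lborel {0..r+1} \<le> emeasure lborel {0::real..}"
    by (rule emeasure_mono) auto
  then show False using r by simp
qed

lemma borel_measurable_antimono:
  fixes h :: "real \<Rightarrow> real"
  assumes "antimono h"
  shows "h \<in> borel_measurable borel"
proof -
  have "mono (\<lambda>y. - h y)" using assms by (auto simp: monotone_on_def)
  then have "(\<lambda>y. - (- h y)) \<in> borel_measurable borel"
    by (intro borel_measurable_uminus borel_measurable_mono)
  then show ?thesis by simp
qed

lemma nn_integral_Ici_shift_le:
  fixes f h :: "real \<Rightarrow> ennreal"
  assumes [measurable]: "h \<in> borel_measurable borel" and "0 \<le> \<epsilon>"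
    and head: "\<And>y. 0 \<le> y \<Longrightarrow> y < \<epsilon> \<Longrightarrow> f y \<le> 1"
    and tail: "\<And>y. \<epsilon> \<le> y \<Longrightarrow> f y \<le> h (y - \<epsilon>)"
  shows "(\<integral>\<^sup>+ y\<in>{0..}. f y \<partial>lborel) \<le> ennreal \<epsilon> + (\<integral>\<^sup>+ y\<in>{0..}. h y \<partial>lborel)"
proof -
  have "(\<integral>\<^sup>+ y\<in>{0..}. f y \<partial>lborel)
      \<le> (\<integral>\<^sup>+ y. indicator {0..<\<epsilon>} y + h (y - \<epsilon>) * indicator {\<epsilon>..} y \<partial>lborel)"
    using head tail by (intro nn_integral_mono) (auto simp: indicator_def not_less)
  also have "\<dots> = (\<integral>\<^sup>+ y. indicator {0..<\<epsilon>} y \<partial>lborel) + (\<integral>\<^sup>+ y. h (y - \<epsilon>) * indicator {\<epsilon>..} y \<partial>lborel)"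
    by (rule nn_integral_add) auto
  also have "(\<integral>\<^sup>+ y. h (y - \<epsilon>) * indicator {\<epsilon>..} y \<partial>lborel) = (\<integral>\<^sup>+ y\<in>{0..}. h y \<partial>lborel)"
    using nn_integral_real_affine[of "\<lambda>y. h (y - \<epsilon>) * indicator {\<epsilon>..} y" 1 \<epsilon>]
    by (simp add: indicator_def)
  finally show ?thesis using \<open>0 \<le> \<epsilon>\<close> by simp
qed

lemma payment_fn_zero:
  assumes "payment_fn T"
  shows "T 0 = 0"
proof -
  obtain f :: "real \<Rightarrow> real" and ts Ts :: "nat \<Rightarrow> real"
    where ts: "\<forall>i. ts i \<ge> 0 \<and> Ts i \<ge> 0"
      and T: "\<forall>t\<ge>0. T t = (LBINT s:{0..t}. f s) + (\<Sum>i. if ts i < t then Ts i else 0)"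
    using assms unfolding payment_fn_def by blast
  have "(LBINT s:{0..0::real}. f s) = 0"
    unfolding set_lebesgue_integral_def
    by (rule integral_eq_zero_AE) (use AE_lborel_singleton[of 0] in \<open>auto elim!: eventually_mono\<close>)
  moreover have "(\<lambda>i. if ts i < 0 then Ts i else 0) = (\<lambda>i. 0::real)"
    using ts by (intro ext) (meson leD)
  ultimately show ?thesis using T by simp
qed

lemma payment_fn_mono:
  assumes "payment_fn T" "0 \<le> s" "s \<le> t"
  shows "T s \<le> T t"
proof -
  obtain f :: "real \<Rightarrow> real" and ts Ts :: "nat \<Rightarrow> real"
    where f: "\<forall>s. f s \<ge> 0" "set_integrable lborel {0..} f"
      and ts: "\<forall>i. ts i \<ge> 0 \<and> Ts i \<ge> 0"
      and T: "\<forall>t\<ge>0. summable (\<lambda>i. if ts i < t then Ts i else 0) \<and>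
                T t = (LBINT s:{0..t}. f s) + (\<Sum>i. if ts i < t then Ts i else 0)"
    using assms(1) unfolding payment_fn_def by blast
  have "set_integrable lborel {0..s} f" "set_integrable lborel {0..t} f"
    by (rule set_integrable_subset[OF f(2)]; auto)+
  then have "(LBINT x:{0..s}. f x) \<le> (LBINT x:{0..t}. f x)"
    using f(1) assms(2,3) unfolding set_lebesgue_integral_def set_integrable_def
    by (intro integral_mono) (auto simp: indicator_def)
  moreover have "(\<Sum>i. if ts i < s then Ts i else 0) \<le> (\<Sum>i. if ts i < t then Ts i else 0)"
    using T ts assms(2,3) by (intro suminf_le) auto
  ultimately show ?thesis using T assms(2,3) by simp
qed

lemma payment_fn_nonneg:
  assumes "payment_fn T" "0 \<le> t"
  shows "0 \<le> T t"
  using payment_fn_mono[OF assms(1) order_refl assms(2)] payment_fn_zero[OF assms(1)] by simp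

lemma payment_fn_add_upfront:
  assumes "payment_fn T" "0 \<le> \<epsilon>"
  shows "payment_fn (add_upfront T \<epsilon>)"
proof -
  obtain f :: "real \<Rightarrow> real" and ts Ts :: "nat \<Rightarrow> real"
    where f: "\<forall>s. f s \<ge> 0" "set_integrable lborel {0..} f"
      and ts: "\<forall>i. ts i \<ge> 0 \<and> Ts i \<ge> 0" "mono ts"
      and T: "\<forall>t\<ge>0. summable (\<lambda>i. if ts i < t then Ts i else 0) \<and>
                T t = (LBINT s:{0..t}. f s) + (\<Sum>i. if ts i < t then Ts i else 0)"
    using assms(1) unfolding payment_fn_def by blast
  \<comment> \<open>the upfront payment becomes an extra jump of size \<epsilon> at time 0\<close>
  define ts' where "ts' = case_nat 0 ts"
  define Ts' where "Ts' = case_nat \<epsilon> Ts"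
  have "\<forall>i. ts' i \<ge> 0 \<and> Ts' i \<ge> 0"
    using ts(1) assms(2) by (simp add: ts'_def Ts'_def split: nat.split)
  moreover have "mono ts'"
  proof (rule monoI)
    fix i j :: nat assume "i \<le> j"
    then show "ts' i \<le> ts' j" using ts
      by (cases i; cases j) (auto simp: ts'_def mono_def)
  qed
  moreover have "summable (\<lambda>i. if ts' i < t then Ts' i else 0) \<and>
      add_upfront T \<epsilon> t = (LBINT s:{0..t}. f s) + (\<Sum>i. if ts' i < t then Ts' i else 0)"
    if "t \<ge> 0" for t
  proof -
    let ?h = "\<lambda>i. if ts' i < t then Ts' i else 0"
    have "(\<lambda>n. ?h (Suc n)) sums (\<Sum>i. if ts i < t then Ts i else 0)"
      using T that by (simp add: ts'_def Ts'_def summable_sums cong: if_cong)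
    then have "?h sums ((\<Sum>i. if ts i < t then Ts i else 0) + ?h 0)"
      by (rule iffD1[OF sums_Suc_iff])
    then show ?thesis using T that by (simp add: add_upfront_def sums_iff ts'_def Ts'_def)
  qed
  ultimately show ?thesis unfolding payment_fn_def using f by blast
qed

lemma T_at_ennreal [simp]: "0 \<le> t \<Longrightarrow> T_at T (ennreal t) = ennreal (T t)"
  by (simp add: T_at_def)

lemma T_at_le_top: "T_at T x \<le> T_at T \<infinity>"
  unfolding T_at_def by (auto intro!: SUP_upper)

lemma T_at_ge:
  assumes "payment_fn T" "0 \<le> t" "ennreal t \<le> x"
  shows "ennreal (T t) \<le> T_at T x"
proof (cases "x = \<infinity>")
  case True
  then show ?thesis using assms(2) by (auto simp: T_at_def intro!: SUP_upper)
next
  case False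
  then have "t \<le> enn2real x"
    using assms(2,3) by (metis enn2real_ennreal enn2real_mono infinity_ennreal_def top.not_eq_extremum)
  then have "T t \<le> T (enn2real x)" using payment_fn_mono[OF assms(1,2)] by simp
  then show ?thesis using False by (simp add: T_at_def ennreal_leI)
qed

lemma borel_measurable_T_at [measurable]:
  assumes "payment_fn T"
  shows "T_at T \<in> borel_measurable borel"
proof -
  have "mono (\<lambda>t. T (max 0 t))"
    by (rule monoI) (auto intro!: payment_fn_mono[OF assms])
  then have [measurable]: "(\<lambda>t. T (max 0 t)) \<in> borel_measurable borel"
    by (rule borel_measurable_mono)
  have "T_at T = (\<lambda>x. if x = \<infinity> then (SUP t\<in>{0..}. ennreal (T t)) else ennreal (T (max 0 (enn2real x))))"
    by (auto simp: T_at_def fun_eq_iff)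
  then show ?thesis by simp
qed

lemma weighting_mono:
  assumes "weighting w" "0 \<le> x" "x \<le> y" "y \<le> 1"
  shows "w x \<le> w y"
  using assms strict_mono_on_leD[of "{0..1}" w x y] unfolding weighting_def by auto

lemma weighting_less_one:
  assumes "weighting w" "0 \<le> x" "x < 1"
  shows "w x < 1"
  using assms strict_mono_onD[of "{0..1}" w x 1] unfolding weighting_def by auto

lemma weighting_bounds:
  assumes "weighting w" "0 \<le> x" "x \<le> 1"
  shows "0 \<le> w x" "w x \<le> 1"
  using assms unfolding weighting_def by auto

lemma weighting_ge_linear:
  assumes "weighting w"
  obtains c where "c > 0" "\<And>p. 0 \<le> p \<Longrightarrow> p \<le> 1 \<Longrightarrow> c * p \<le> w p"
proof -
  obtain w1 where d0: "(w has_real_derivative w1 0) (at 0 within {0..1})" and "w1 0 > 1"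
    using assms unfolding weighting_def by force
  have w0: "w 0 = 0" using assms unfolding weighting_def by auto
  have "((\<lambda>y. (w y - w 0) / (y - 0)) \<longlongrightarrow> w1 0) (at 0 within {0..1})"
    using d0 by (simp add: has_field_derivative_iff)
  then have "eventually (\<lambda>y. (w y - w 0) / (y - 0) > 1) (at 0 within {0..1})"
    using \<open>w1 0 > 1\<close> by (rule order_tendstoD)
  then obtain d where "d > 0"
    and dP: "\<And>y. y \<in> {0..1} \<Longrightarrow> y \<noteq> 0 \<Longrightarrow> dist y 0 < d \<Longrightarrow> (w y - w 0) / (y - 0) > 1"
    unfolding eventually_at by blast
  define e where "e = min (d/2) 1"
  have e: "0 < e" "e \<le> 1" "e < d" using \<open>d > 0\<close> by (auto simp: e_def)
  \<comment> \<open>\<open>w' 0 > 1\<close> makes \<open>w p > p\<close> on \<open>(0, e]\<close>; beyond \<open>e\<close>, monotonicity gives \<open>w p \<ge> w e > e \<ge> e p\<close>\<close>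
  have small: "p < w p" if "0 < p" "p \<le> e" for p
    using dP[of p] that e w0 by (simp add: field_simps)
  have "e * p \<le> w p" if p: "0 \<le> p" "p \<le> 1" for p
  proof (cases "p \<le> e")
    case True
    have "e * p \<le> p" using e p by (simp add: mult_left_le_one_le)
    moreover have "p \<le> w p" using small[of p] True p w0 by (cases "p = 0") auto
    ultimately show ?thesis by linarith
  next
    case False
    then have "e < w e" "w e \<le> w p" using small[of e] weighting_mono[OF assms, of e p] e p by auto
    moreover have "e * p \<le> e" using e p by (simp add: mult_right_le_one_le)
    ultimately show ?thesis by simp
  qed
  with e(1) show ?thesis using that by blast
qed

lemma stopping_lawD:
  assumes "stopping_law \<mu>"
  shows "prob_space \<mu>" "finite_measure \<mu>" "sets \<mu> = sets borel" "space \<mu> = UNIV"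
  using assms sets_eq_imp_space_eq[of \<mu> borel] unfolding stopping_law_def prob_space_def by auto

lemma cond_prob_nonneg: "0 \<le> cond_prob \<mu> E s"
  unfolding cond_prob_def by simp

lemma cond_prob_le_one:
  assumes "finite_measure \<mu>" "sets \<mu> = sets borel"
  shows "cond_prob \<mu> E s \<le> 1"
proof -
  interpret finite_measure \<mu> by fact
  have "measure \<mu> (E \<inter> {ennreal s<..}) \<le> measure \<mu> {ennreal s<..}"
    using assms(2) by (intro finite_measure_mono) auto
  then show ?thesis
    unfolding cond_prob_def by (auto simp: divide_le_eq_1 zero_less_measure_iff)
qed

lemma weighting_cond_prob_mono:
  assumes "weighting w" "stopping_law \<mu>" "cond_prob \<mu>' E' s' \<le> cond_prob \<mu> E s"
  shows "w (cond_prob \<mu>' E' s') \<le> w (cond_prob \<mu> E s)"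
  using weighting_mono[OF assms(1) cond_prob_nonneg assms(3)]
    cond_prob_le_one[OF stopping_lawD(2,3)[OF assms(2)]] by blast

lemma borel_measurable_weighted_loss_tail [measurable]:
  assumes "stopping_law \<mu>" "payment_fn T" "weighting w"
  shows "weighted_loss_tail w \<mu> T s \<in> borel_measurable borel"
proof -
  interpret prob_space \<mu> using stopping_lawD(1)[OF assms(1)] .
  have "antimono (\<lambda>y. w (cond_prob \<mu> {x. T_at T x - ennreal (T s) > ennreal y} s))"
  proof (rule antimonoI)
    fix y y' :: real assume "y \<le> y'"
    have "{x. T_at T x - ennreal (T s) > ennreal y'} \<subseteq> {x. T_at T x - ennreal (T s) > ennreal y}"
      using \<open>y \<le> y'\<close> by (auto intro: le_less_trans[OF ennreal_leI])
    moreover have "{x. T_at T x - ennreal (T s) > ennreal y} \<inter> {ennreal s<..} \<in> sets \<mu>"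
      using assms(2) stopping_lawD(3)[OF assms(1)] by measurable
    ultimately have "cond_prob \<mu> {x. T_at T x - ennreal (T s) > ennreal y'} s
        \<le> cond_prob \<mu> {x. T_at T x - ennreal (T s) > ennreal y} s"
      unfolding cond_prob_def by (intro divide_right_mono finite_measure_mono) auto
    then show "w (cond_prob \<mu> {x. T_at T x - ennreal (T s) > ennreal y'} s)
        \<le> w (cond_prob \<mu> {x. T_at T x - ennreal (T s) > ennreal y} s)"
      by (rule weighting_cond_prob_mono[OF assms(3,1)])
  qed
  then have [measurable]: "(\<lambda>y. w (cond_prob \<mu> {x. T_at T x - ennreal (T s) > ennreal y} s)) \<in> borel_measurable borel"
    by (rule borel_measurable_antimono)
  show ?thesis unfolding weighted_loss_tail_def[abs_def] by measurable
qed

lemma abs_continuous_on_cap: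
  assumes "abs_continuous_on {0..} A" "0 < m"
  shows "abs_continuous_on {0..} (\<lambda>t. A (min t m))"
  unfolding abs_continuous_on_def
proof (intro allI impI)
  fix e :: real assume "e > 0"
  from assms(1)[unfolded abs_continuous_on_def, rule_format, OF this]
  obtain \<delta> where "\<delta> > 0" and H: "\<forall>(n::nat) (a::nat \<Rightarrow> real) b. (\<forall>i<n. a i \<le> b i \<and> {a i..b i} \<subseteq> {0..}) \<and>
        (\<forall>i<n. \<forall>j<n. i \<noteq> j \<longrightarrow> b i \<le> a j \<or> b j \<le> a i) \<and> (\<Sum>i<n. b i - a i) < \<delta>
        \<longrightarrow> (\<Sum>i<n. \<bar>A (b i) - A (a i)\<bar>) < e"
    by (elim exE conjE) (rule that)
  have capped_variation: "(\<Sum>i<n. \<bar>A (min (b i) m) - A (min (a i) m)\<bar>) < e"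
    if ab: "\<forall>i<n. a i \<le> b i \<and> {a i..b i} \<subseteq> {0..}"
      and disj: "\<forall>i<n. \<forall>j<n. i \<noteq> j \<longrightarrow> b i \<le> a j \<or> b j \<le> a i"
      and len: "(\<Sum>i<n. b i - a i) < \<delta>" for n :: nat and a b :: "nat \<Rightarrow> real"
  proof (rule H[rule_format], intro conjI)
    show "\<forall>i<n. min (a i) m \<le> min (b i) m \<and> {min (a i) m..min (b i) m} \<subseteq> {0..}"
    proof (intro allI impI conjI)
      fix i assume "i < n"
      then have "0 \<le> a i" "a i \<le> b i" using ab by auto
      then show "min (a i) m \<le> min (b i) m" "{min (a i) m..min (b i) m} \<subseteq> {0..}"
        using assms(2) by auto
    qed
    show "\<forall>i<n. \<forall>j<n. i \<noteq> j \<longrightarrow> min (b i) m \<le> min (a j) m \<or> min (b j) m \<le> min (a i) m"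
    proof (intro allI impI)
      fix i j assume "i < n" "j < n" "i \<noteq> j"
      then have "b i \<le> a j \<or> b j \<le> a i" using disj by blast
      then show "min (b i) m \<le> min (a j) m \<or> min (b j) m \<le> min (a i) m" by linarith
    qed
    have "(\<Sum>i<n. min (b i) m - min (a i) m) \<le> (\<Sum>i<n. b i - a i)"
      using ab by (intro sum_mono) auto
    then show "(\<Sum>i<n. min (b i) m - min (a i) m) < \<delta>" using len by linarith
  qed
  show "\<exists>\<delta>>0. \<forall>(n::nat) a b. (\<forall>i<n. a i \<le> b i \<and> {a i..b i} \<subseteq> {0..}) \<and>
        (\<forall>i<n. \<forall>j<n. i \<noteq> j \<longrightarrow> b i \<le> a j \<or> b j \<le> a i) \<and> (\<Sum>i<n. b i - a i) < \<delta> \<longrightarrow>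
        (\<Sum>i<n. \<bar>A (min (b i) m) - A (min (a i) m)\<bar>) < e"
    by (intro exI[of _ \<delta>] conjI allI impI \<open>\<delta> > 0\<close>) (elim conjE, rule capped_variation)
qed

lemma jump_fn_cap:
  assumes "jump_fn J" "0 < m" "0 \<le> d"
  shows "jump_fn (\<lambda>t. J (min t m) + (if m \<le> t then d else 0))"
proof -
  obtain a c :: "nat \<Rightarrow> real" where c: "\<forall>i. c i \<ge> 0"
    and J: "\<forall>t\<ge>0. summable (\<lambda>i. if a i \<le> t then c i else 0) \<and> J t = (\<Sum>i. if a i \<le> t then c i else 0)"
    using assms(1) unfolding jump_fn_def by blast
  \<comment> \<open>the jumps after \<open>m\<close> are dropped, and a jump of size \<open>d\<close> is added at \<open>m\<close>\<close>
  define a' where "a' = case_nat m a"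
  define c' where "c' = case_nat d (\<lambda>j. if a j \<le> m then c j else 0)"
  have "\<forall>i. c' i \<ge> 0" using c assms(3) by (simp add: c'_def split: nat.split)
  moreover have "summable (\<lambda>i. if a' i \<le> t then c' i else 0) \<and>
      J (min t m) + (if m \<le> t then d else 0) = (\<Sum>i. if a' i \<le> t then c' i else 0)"
    if "0 \<le> t" for t
  proof -
    let ?h = "\<lambda>i. if a' i \<le> t then c' i else 0"
    have "(\<lambda>n. ?h (Suc n)) = (\<lambda>i. if a i \<le> min t m then c i else 0)"
      by (auto simp: a'_def c'_def fun_eq_iff)
    moreover have "min t m \<ge> 0" using that assms(2) by simp
    then have "summable (\<lambda>i. if a i \<le> min t m then c i else 0)"
      and "J (min t m) = (\<Sum>i. if a i \<le> min t m then c i else 0)"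
      using J by blast+
    ultimately have "(\<lambda>n. ?h (Suc n)) sums J (min t m)"
      by (simp add: summable_sums)
    then have "?h sums (J (min t m) + ?h 0)"
      by (rule iffD1[OF sums_Suc_iff])
    then show ?thesis by (simp add: sums_iff a'_def c'_def)
  qed
  ultimately show ?thesis unfolding jump_fn_def by blast
qed

lemma measurable_cap_stopping_law:
  assumes "stopping_law \<mu>"
  shows "(\<lambda>x::ennreal. min x c) \<in> measurable \<mu> borel"
proof -
  have "(\<lambda>x::ennreal. min x c) \<in> borel_measurable borel" by measurable
  then show ?thesis using measurable_cong_sets[OF stopping_lawD(3)[OF assms] refl] by blast
qed

lemma emeasure_capped_law:
  assumes "stopping_law \<mu>" "B \<in> sets borel"
  shows "emeasure (capped_law \<mu> m) B = emeasure \<mu> ((\<lambda>x. min x (ennreal m)) -` B)"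
  using emeasure_distr[OF measurable_cap_stopping_law[OF assms(1)] assms(2)] stopping_lawD(4)[OF assms(1)]
  unfolding capped_law_def by simp

lemma measure_capped_law:
  assumes "stopping_law \<mu>" "B \<in> sets borel"
  shows "measure (capped_law \<mu> m) B = measure \<mu> ((\<lambda>x. min x (ennreal m)) -` B)"
  using emeasure_capped_law[OF assms] unfolding measure_def by simp

lemma measure_capped_law_atMost:
  assumes "stopping_law \<mu>" "0 \<le> t"
  shows "measure (capped_law \<mu> m) {..ennreal t} = (if m \<le> t then 1 else measure \<mu> {..ennreal t})"
proof (cases "m \<le> t")
  case True
  then have "(\<lambda>x. min x (ennreal m)) -` {..ennreal t} = space \<mu>"
    using stopping_lawD(4)[OF assms(1)] by (auto intro: min.coboundedI2 ennreal_leI)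
  then show ?thesis
    using True measure_capped_law[OF assms(1)] prob_space.prob_space[OF stopping_lawD(1)[OF assms(1)]]
    by simp
next
  case False
  then have "(\<lambda>x. min x (ennreal m)) -` {..ennreal t} = {..ennreal t}"
    using assms(2) by (auto simp: min_le_iff_disj)
  then show ?thesis using False measure_capped_law[OF assms(1)] by simp
qed

lemma stopping_law_capped_law:
  assumes "stopping_law \<mu>" "0 < m"
  shows "stopping_law (capped_law \<mu> m)"
proof -
  obtain A J where A: "mono_on {0..} A" "\<forall>t\<ge>0. A t \<ge> 0" "abs_continuous_on {0..} A"
    and J: "mono_on {0..} J" "\<forall>t\<ge>0. J t \<ge> 0" "jump_fn J"
    and cdf: "\<forall>t\<ge>0. measure \<mu> {..ennreal t} = A t + J t"
    using assms(1) unfolding stopping_law_def by blast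
  define d where "d = 1 - measure \<mu> {..ennreal m}"
  have "0 \<le> d" unfolding d_def using prob_space.prob_le_1[OF stopping_lawD(1)[OF assms(1)]] by simp
  define A' where "A' t = A (min t m)" for t
  define J' where "J' t = J (min t m) + (if m \<le> t then d else 0)" for t
  have "prob_space (capped_law \<mu> m)"
    unfolding capped_law_def
    by (intro prob_space.prob_space_distr stopping_lawD(1) measurable_cap_stopping_law assms(1))
  moreover have "sets (capped_law \<mu> m) = sets borel" by (simp add: capped_law_def)
  moreover have "mono_on {0..} A'"
    unfolding A'_def by (rule mono_onI) (use assms(2) in \<open>auto intro!: mono_onD[OF A(1)]\<close>)
  moreover have "mono_on {0..} J'"
  proof (rule mono_onI)
    fix r s :: real assume "r \<in> {0..}" "s \<in> {0..}" "r \<le> s"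
    then have "J (min r m) \<le> J (min s m)" using assms(2) by (auto intro!: mono_onD[OF J(1)])
    then show "J' r \<le> J' s" using \<open>0 \<le> d\<close> \<open>r \<le> s\<close> by (auto simp: J'_def)
  qed
  moreover have "\<forall>t\<ge>0. A' t \<ge> 0" "\<forall>t\<ge>0. J' t \<ge> 0"
    using A(2) J(2) \<open>0 \<le> d\<close> assms(2) by (auto simp: A'_def J'_def)
  moreover have "abs_continuous_on {0..} A'"
    unfolding A'_def[abs_def] by (rule abs_continuous_on_cap[OF A(3) assms(2)])
  moreover have "jump_fn J'"
    unfolding J'_def[abs_def] by (rule jump_fn_cap[OF J(3) assms(2) \<open>0 \<le> d\<close>])
  moreover have "\<forall>t\<ge>0. measure (capped_law \<mu> m) {..ennreal t} = A' t + J' t"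
    using cdf assms(2) by (auto simp: measure_capped_law_atMost[OF assms(1)] A'_def J'_def d_def)
  ultimately show ?thesis
    unfolding stopping_law_def by blast
qed

lemma vimage_cap_Ioi:
  assumes "0 \<le> s" "s < m"
  shows "(\<lambda>x. min x (ennreal m)) -` {ennreal s<..} = {ennreal s<..}"
proof -
  have "ennreal s < ennreal m" using assms by (intro ennreal_lessI) auto
  then show ?thesis by auto
qed

lemma capped_law_Ioi_pos_imp_less:
  assumes "stopping_law \<mu>" "0 < measure (capped_law \<mu> m) {ennreal s<..}"
  shows "s < m"
proof (rule ccontr)
  assume "\<not> s < m"
  then have "ennreal m \<le> ennreal s" by (simp add: ennreal_leI)
  then have "(\<lambda>x. min x (ennreal m)) -` {ennreal s<..} = {}"
    using leD[OF \<open>ennreal m \<le> ennreal s\<close>] by auto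
  then show False using assms measure_capped_law[OF assms(1)] by simp
qed

lemma measure_capped_law_Ioi:
  assumes "stopping_law \<mu>" "0 \<le> s" "s < m"
  shows "measure (capped_law \<mu> m) {ennreal s<..} = measure \<mu> {ennreal s<..}"
  using measure_capped_law[OF assms(1)] vimage_cap_Ioi[OF assms(2,3)] by simp

lemma cond_prob_capped_law_finite:
  assumes "stopping_law \<mu>" "0 \<le> s" "s < m" "0 < measure \<mu> {ennreal s<..}"
  shows "cond_prob (capped_law \<mu> m) {x. x < \<infinity>} s = 1"
proof -
  have "(\<lambda>x. min x (ennreal m)) -` ({x. x < \<infinity>} \<inter> {ennreal s<..}) = {ennreal s<..}"
    using vimage_cap_Ioi[OF assms(2,3)] by (auto simp: min_less_iff_disj)
  then show ?thesis
    using assms measure_capped_law[OF assms(1), of "{x. x < \<infinity>} \<inter> {ennreal s<..}"]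
    unfolding cond_prob_def by (simp add: measure_capped_law_Ioi)
qed

lemma cond_prob_capped_le:
  assumes "stopping_law \<mu>" "payment_fn T" "payment_fn T'" "0 \<le> s" "s < m" "0 \<le> y" "0 \<le> z"
    and incr: "\<And>t. s < t \<Longrightarrow> t \<le> m \<Longrightarrow> y + T' s < T' t \<Longrightarrow> z + T s < T t"
  shows "cond_prob (capped_law \<mu> m) {x. T_at T' x - ennreal (T' s) > ennreal y} s
      \<le> cond_prob \<mu> {x. T_at T x - ennreal (T s) > ennreal z} s"
proof -
  interpret prob_space \<mu> using stopping_lawD(1)[OF assms(1)] .
  let ?g = "\<lambda>x::ennreal. min x (ennreal m)"
  let ?E' = "{x. T_at T' x - ennreal (T' s) > ennreal y} \<inter> {ennreal s<..}"
  let ?E = "{x. T_at T x - ennreal (T s) > ennreal z} \<inter> {ennreal s<..}"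
  have "?g -` ?E' \<subseteq> ?E"
  proof
    fix x assume x: "x \<in> ?g -` ?E'"
    define t where "t = enn2real (?g x)"
    have "?g x \<le> ennreal m" by simp
    then have "?g x < \<top>" using ennreal_less_top[of m] by (rule le_less_trans)
    then have gx: "?g x = ennreal t" unfolding t_def by simp
    have "0 \<le> t" by (simp add: t_def)
    have "ennreal s < ennreal t" using x gx by simp
    then have "s < t" using ennreal_less_iff[OF assms(4)] by simp
    have "ennreal t \<le> ennreal m" using gx by (metis min.cobounded2)
    then have "t \<le> m" using assms(4,5) by (simp add: ennreal_le_iff)
    have "T' s \<ge> 0" "T s \<ge> 0" using payment_fn_nonneg assms(2-4) by auto
    then have "ennreal (y + T' s) < ennreal (T' t)"
      using x gx \<open>0 \<le> t\<close> ennreal_less_diff_iff[of "T' s" y] assms(6) by simp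
    then have "y + T' s < T' t" using \<open>T' s \<ge> 0\<close> assms(6) by (metis add_nonneg_nonneg ennreal_less_iff)
    then have "z + T s < T t" by (rule incr[OF \<open>s < t\<close> \<open>t \<le> m\<close>])
    then have "ennreal (z + T s) < ennreal (T t)"
      using \<open>T s \<ge> 0\<close> assms(7) by (intro ennreal_lessI) auto
    also have "\<dots> \<le> T_at T x"
      using gx by (intro T_at_ge[OF assms(2) \<open>0 \<le> t\<close>]) (metis min.cobounded1)
    finally show "x \<in> ?E"
      using x \<open>T s \<ge> 0\<close> ennreal_less_diff_iff[of "T s" z] assms(7) by auto
  qed
  moreover have "?E \<in> sets \<mu>" using assms(2) stopping_lawD(3)[OF assms(1)] by measurable
  ultimately have "measure \<mu> (?g -` ?E') \<le> measure \<mu> ?E" by (rule finite_measure_mono)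
  moreover have "measure (capped_law \<mu> m) ?E' = measure \<mu> (?g -` ?E')"
    by (rule measure_capped_law[OF assms(1)]) (use assms(3) in measurable)
  ultimately show ?thesis
    unfolding cond_prob_def measure_capped_law_Ioi[OF assms(1,4,5)] by (simp add: divide_right_mono)
qed

lemma weighted_loss_tail_le_one:
  assumes "stopping_law \<mu>" "weighting w"
  shows "weighted_loss_tail w \<mu> T s y \<le> 1"
  using weighting_bounds(2)[OF assms(2) cond_prob_nonneg cond_prob_le_one[OF stopping_lawD(2,3)[OF assms(1)]]]
  unfolding weighted_loss_tail_def by simp

lemma weighted_loss_tail_capped_upfront_le:
  assumes "stopping_law \<mu>" "payment_fn T" "weighting w" "0 < s" "s < m" "0 \<le> \<epsilon>" "0 \<le> y"
  shows "weighted_loss_tail w (capped_law \<mu> m) (add_upfront T \<epsilon>) s y \<le> weighted_loss_tail w \<mu> T s y"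
proof -
  have "cond_prob (capped_law \<mu> m) {x. T_at (add_upfront T \<epsilon>) x - ennreal (add_upfront T \<epsilon> s) > ennreal y} s
      \<le> cond_prob \<mu> {x. T_at T x - ennreal (T s) > ennreal y} s"
  proof (rule cond_prob_capped_le[OF assms(1,2) payment_fn_add_upfront[OF assms(2,6)]])
    fix t assume "s < t" "y + add_upfront T \<epsilon> s < add_upfront T \<epsilon> t"
    then show "y + T s < T t" using assms(4) by (simp add: add_upfront_def)
  qed (use assms in auto)
  then show ?thesis
    unfolding weighted_loss_tail_def by (intro ennreal_leI weighting_cond_prob_mono[OF assms(3,1)])
qed

lemma weighted_loss_tail_capped_upfront_le_shift:
  assumes "stopping_law \<mu>" "payment_fn T" "weighting w" "0 < m" "0 \<le> \<epsilon>" "\<epsilon> \<le> y"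
  shows "weighted_loss_tail w (capped_law \<mu> m) (add_upfront T \<epsilon>) 0 y \<le> weighted_loss_tail w \<mu> T 0 (y - \<epsilon>)"
proof -
  have "cond_prob (capped_law \<mu> m) {x. T_at (add_upfront T \<epsilon>) x - ennreal (add_upfront T \<epsilon> 0) > ennreal y} 0
      \<le> cond_prob \<mu> {x. T_at T x - ennreal (T 0) > ennreal (y - \<epsilon>)} 0"
  proof (rule cond_prob_capped_le[OF assms(1,2) payment_fn_add_upfront[OF assms(2,5)]])
    fix t assume "0 < t" "y + add_upfront T \<epsilon> 0 < add_upfront T \<epsilon> t"
    then show "y - \<epsilon> + T 0 < T t" using payment_fn_zero[OF assms(2)] by (simp add: add_upfront_def)
  qed (use assms in auto)
  then show ?thesis
    unfolding weighted_loss_tail_def by (intro ennreal_leI weighting_cond_prob_mono[OF assms(3,1)])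
qed

lemma DIR_compatibleD:
  assumes "DIR_compatible \<theta> lam wp wm \<mu> T" "0 \<le> s" "0 < measure \<mu> {ennreal s<..}"
  shows "ennreal lam * (\<integral>\<^sup>+ y\<in>{0..}. weighted_loss_tail wm \<mu> T s y \<partial>lborel)
      \<le> ennreal (\<theta> * wp (cond_prob \<mu> {x. x < \<infinity>} s))"
  using assms(1)[unfolded DIR_compatible_def, THEN conjunct2, THEN conjunct2, rule_format, OF assms(2,3)]
  unfolding weighted_loss_tail_def .

lemma capped_upfront_loss_le_after_start:
  assumes "0 < \<theta>" "weighting wp" "weighting wm" and dir: "DIR_compatible \<theta> lam wp wm \<mu> T"
    and "0 < s" "s < m" "0 \<le> \<epsilon>" and pos: "0 < measure \<mu> {ennreal s<..}"
  shows "ennreal lam * (\<integral>\<^sup>+ y\<in>{0..}. weighted_loss_tail wm (capped_law \<mu> m) (add_upfront T \<epsilon>) s y \<partial>lborel)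
    \<le> ennreal \<theta>"
proof -
  have sl: "stopping_law \<mu>" and pT: "payment_fn T" using dir unfolding DIR_compatible_def by auto
  have "(\<integral>\<^sup>+ y\<in>{0..}. weighted_loss_tail wm (capped_law \<mu> m) (add_upfront T \<epsilon>) s y \<partial>lborel)
      \<le> (\<integral>\<^sup>+ y\<in>{0..}. weighted_loss_tail wm \<mu> T s y \<partial>lborel)"
    using weighted_loss_tail_capped_upfront_le[OF sl pT assms(3,5-7)]
    by (intro nn_integral_mono) (simp add: indicator_def)
  then have "ennreal lam * (\<integral>\<^sup>+ y\<in>{0..}. weighted_loss_tail wm (capped_law \<mu> m) (add_upfront T \<epsilon>) s y \<partial>lborel)
      \<le> ennreal lam * (\<integral>\<^sup>+ y\<in>{0..}. weighted_loss_tail wm \<mu> T s y \<partial>lborel)"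
    by (rule mult_left_mono) simp
  also have "\<dots> \<le> ennreal (\<theta> * wp (cond_prob \<mu> {x. x < \<infinity>} s))"
    using assms(5) by (intro DIR_compatibleD[OF dir _ pos]) simp
  also have "\<dots> \<le> ennreal \<theta>"
    using weighting_bounds(2)[OF assms(2) cond_prob_nonneg cond_prob_le_one[OF stopping_lawD(2,3)[OF sl]]]
      assms(1) by (intro ennreal_leI) (simp add: mult_left_le)
  finally show ?thesis .
qed

lemma capped_upfront_loss_le_at_start:
  assumes "0 < \<theta>" "0 < lam" "weighting wp" "weighting wm" and dir: "DIR_compatible \<theta> lam wp wm \<mu> T"
    and "0 < m" "0 \<le> \<epsilon>" and slack: "lam * \<epsilon> \<le> \<theta> * (1 - wp (cond_prob \<mu> {x. x < \<infinity>} 0))"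
    and pos: "0 < measure \<mu> {ennreal 0<..}"
  shows "ennreal lam * (\<integral>\<^sup>+ y\<in>{0..}. weighted_loss_tail wm (capped_law \<mu> m) (add_upfront T \<epsilon>) 0 y \<partial>lborel)
    \<le> ennreal \<theta>"
proof -
  have sl: "stopping_law \<mu>" and pT: "payment_fn T" using dir unfolding DIR_compatible_def by auto
  let ?q = "wp (cond_prob \<mu> {x. x < \<infinity>} 0)"
  let ?I = "\<integral>\<^sup>+ y\<in>{0..}. weighted_loss_tail wm \<mu> T 0 y \<partial>lborel"
  have q: "0 \<le> ?q" "?q \<le> 1"
    using weighting_bounds[OF assms(3) cond_prob_nonneg cond_prob_le_one[OF stopping_lawD(2,3)[OF sl]]]
    by auto
  have "(\<integral>\<^sup>+ y\<in>{0..}. weighted_loss_tail wm (capped_law \<mu> m) (add_upfront T \<epsilon>) 0 y \<partial>lborel)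
      \<le> ennreal \<epsilon> + ?I"
    by (intro nn_integral_Ici_shift_le borel_measurable_weighted_loss_tail[OF sl pT assms(4)] assms(7)
        weighted_loss_tail_le_one[OF stopping_law_capped_law[OF sl assms(6)] assms(4)]
        weighted_loss_tail_capped_upfront_le_shift[OF sl pT assms(4,6,7)])
  then have "ennreal lam * (\<integral>\<^sup>+ y\<in>{0..}. weighted_loss_tail wm (capped_law \<mu> m) (add_upfront T \<epsilon>) 0 y \<partial>lborel)
      \<le> ennreal lam * (ennreal \<epsilon> + ?I)"
    by (rule mult_left_mono) simp
  also have "\<dots> = ennreal (lam * \<epsilon>) + ennreal lam * ?I"
    using assms(2,7) by (simp add: distrib_left ennreal_mult)
  also have "\<dots> \<le> ennreal (\<theta> * (1 - ?q)) + ennreal (\<theta> * ?q)"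
    using DIR_compatibleD[OF dir order_refl pos] slack by (intro add_mono ennreal_leI) auto
  also have "\<dots> = ennreal \<theta>"
    using assms(1) q by (simp add: ennreal_plus[symmetric] algebra_simps del: ennreal_plus)
  finally show ?thesis .
qed

lemma DIR_compatible_capped_upfront:
  assumes "0 < \<theta>" "0 < lam" "weighting wp" "weighting wm"
    and dir: "DIR_compatible \<theta> lam wp wm \<mu> T" and "0 < m" "0 \<le> \<epsilon>"
    and slack: "lam * \<epsilon> \<le> \<theta> * (1 - wp (cond_prob \<mu> {x. x < \<infinity>} 0))"
  shows "DIR_compatible \<theta> lam wp wm (capped_law \<mu> m) (add_upfront T \<epsilon>)"
proof -
  have sl: "stopping_law \<mu>" and pT: "payment_fn T" using dir unfolding DIR_compatible_def by auto
  have bound: "ennreal lam * (\<integral>\<^sup>+ y\<in>{0..}. weighted_loss_tail wm (capped_law \<mu> m) (add_upfront T \<epsilon>) s y \<partial>lborel)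
      \<le> ennreal (\<theta> * wp (cond_prob (capped_law \<mu> m) {x. x < \<infinity>} s))"
    if "0 \<le> s" and pos: "0 < measure (capped_law \<mu> m) {ennreal s<..}" for s
  proof -
    have "s < m" by (rule capped_law_Ioi_pos_imp_less[OF sl pos])
    then have pos_\<mu>: "0 < measure \<mu> {ennreal s<..}"
      using pos measure_capped_law_Ioi[OF sl \<open>0 \<le> s\<close>] by simp
    have "wp (cond_prob (capped_law \<mu> m) {x. x < \<infinity>} s) = 1"
      using cond_prob_capped_law_finite[OF sl \<open>0 \<le> s\<close> \<open>s < m\<close> pos_\<mu>] assms(3)
      by (simp add: weighting_def)
    moreover have "ennreal lam * (\<integral>\<^sup>+ y\<in>{0..}. weighted_loss_tail wm (capped_law \<mu> m) (add_upfront T \<epsilon>) s y \<partial>lborel)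
        \<le> ennreal \<theta>"
      using capped_upfront_loss_le_after_start[OF assms(1,3,4) dir _ \<open>s < m\<close> assms(7) pos_\<mu>]
        capped_upfront_loss_le_at_start[OF assms(1-7) slack] pos_\<mu> \<open>0 \<le> s\<close>
      by (cases "s = 0") auto
    ultimately show ?thesis by simp
  qed
  show ?thesis
    using stopping_law_capped_law[OF sl assms(6)] payment_fn_add_upfront[OF pT assms(7)]
      bound[unfolded weighted_loss_tail_def]
    unfolding DIR_compatible_def by blast
qed

lemma borel_measurable_tail_T_at [measurable]:
  assumes "stopping_law \<mu>" "payment_fn T"
  shows "(\<lambda>y. emeasure \<mu> {x. T_at T x > ennreal y}) \<in> borel_measurable borel"
proof -
  interpret prob_space \<mu> using stopping_lawD(1)[OF assms(1)] .
  have "antimono (\<lambda>y. measure \<mu> {x. T_at T x > ennreal y})"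
  proof (rule antimonoI)
    fix y y' :: real assume "y \<le> y'"
    then have "{x. T_at T x > ennreal y'} \<subseteq> {x. T_at T x > ennreal y}"
      by (auto intro: le_less_trans[OF ennreal_leI])
    moreover have "{x. T_at T x > ennreal y} \<in> sets \<mu>"
      using assms(2) stopping_lawD(3)[OF assms(1)] by measurable
    ultimately show "measure \<mu> {x. T_at T x > ennreal y'} \<le> measure \<mu> {x. T_at T x > ennreal y}"
      by (rule finite_measure_mono)
  qed
  then have [measurable]: "(\<lambda>y. measure \<mu> {x. T_at T x > ennreal y}) \<in> borel_measurable borel"
    by (rule borel_measurable_antimono)
  show ?thesis by (simp add: emeasure_eq_measure)
qed

lemma emeasure_tail_le_weighted_loss_tail:
  assumes "stopping_law \<mu>" "payment_fn T" "0 < c" and c: "\<And>p. 0 \<le> p \<Longrightarrow> p \<le> 1 \<Longrightarrow> c * p \<le> w p"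
    and pos: "0 < measure \<mu> {ennreal 0<..}"
  shows "emeasure \<mu> {x. T_at T x > ennreal y}
    \<le> ennreal (measure \<mu> {ennreal 0<..} / c) * weighted_loss_tail w \<mu> T 0 y"
proof -
  interpret prob_space \<mu> using stopping_lawD(1)[OF assms(1)] .
  let ?p0 = "measure \<mu> {ennreal 0<..}" and ?G = "measure \<mu> {x. T_at T x > ennreal y}"
  \<comment> \<open>since \<open>T 0 = 0\<close>, conditioning on \<open>\<tau> > 0\<close> only rescales the tail of \<open>T(\<tau>)\<close> by \<open>p0\<close>\<close>
  have "T_at T 0 = 0" using T_at_ennreal[of 0 T] payment_fn_zero[OF assms(2)] by simp
  then have "{x. T_at T x - ennreal (T 0) > ennreal y} \<inter> {ennreal 0<..} = {x. T_at T x > ennreal y}"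
    using payment_fn_zero[OF assms(2)] by (auto simp: zero_less_iff_neq_zero)
  then have cp: "cond_prob \<mu> {x. T_at T x - ennreal (T 0) > ennreal y} 0 = ?G / ?p0"
    unfolding cond_prob_def by simp
  then have "?G / ?p0 \<le> 1" using cond_prob_le_one[OF stopping_lawD(2,3)[OF assms(1)]] by metis
  moreover have "0 \<le> ?G / ?p0" by simp
  ultimately have "c * (?G / ?p0) \<le> w (?G / ?p0)" by (rule c[rotated])
  then have "?G \<le> ?p0 / c * w (?G / ?p0)" using assms(3) pos by (simp add: field_simps)
  then have "ennreal ?G \<le> ennreal (?p0 / c * w (?G / ?p0))" by (rule ennreal_leI)
  also have "\<dots> = ennreal (?p0 / c) * ennreal (w (?G / ?p0))"
    by (rule ennreal_mult') (use assms(3) in simp)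
  finally show ?thesis unfolding weighted_loss_tail_def cp by (simp add: emeasure_eq_measure)
qed

lemma DIR_compatible_revenue_finite:
  assumes "0 < lam" "weighting wm" and dir: "DIR_compatible \<theta> lam wp wm \<mu> T"
    and pos: "0 < measure \<mu> {ennreal 0<..}"
  shows "revenue \<mu> T < \<infinity>"
proof -
  have sl: "stopping_law \<mu>" and pT: "payment_fn T" using dir unfolding DIR_compatible_def by auto
  obtain c where "0 < c" and c: "\<And>p. 0 \<le> p \<Longrightarrow> p \<le> 1 \<Longrightarrow> c * p \<le> wm p"
    using weighting_ge_linear[OF assms(2)] by blast
  let ?C = "ennreal (measure \<mu> {ennreal 0<..} / c)"
  have "revenue \<mu> T \<le> (\<integral>\<^sup>+ y\<in>{0..}. ?C * weighted_loss_tail wm \<mu> T 0 y \<partial>lborel)"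
    unfolding revenue_def using emeasure_tail_le_weighted_loss_tail[OF sl pT \<open>0 < c\<close> c pos]
    by (intro nn_integral_mono mult_right_mono) auto
  also have "\<dots> = ?C * (\<integral>\<^sup>+ y\<in>{0..}. weighted_loss_tail wm \<mu> T 0 y \<partial>lborel)"
    using borel_measurable_weighted_loss_tail[OF sl pT assms(2)]
    by (simp add: mult.assoc nn_integral_cmult)
  also have "\<dots> < \<infinity>"
  proof -
    have "ennreal lam * (\<integral>\<^sup>+ y\<in>{0..}. weighted_loss_tail wm \<mu> T 0 y \<partial>lborel) < \<infinity>"
      using DIR_compatibleD[OF dir order_refl pos] by (rule le_less_trans) simp
    then show ?thesis using assms(1) by (simp add: ennreal_mult_less_top)
  qed
  finally show ?thesis .
qed

lemma T_at_top_finite: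
  assumes "stopping_law \<mu>" "payment_fn T" "revenue \<mu> T < \<infinity>" "0 < measure \<mu> {\<infinity>}"
  shows "T_at T \<infinity> < \<infinity>"
proof (rule ccontr)
  interpret prob_space \<mu> using stopping_lawD(1)[OF assms(1)] .
  assume "\<not> T_at T \<infinity> < \<infinity>"
  then have "T_at T \<infinity> = \<infinity>" unfolding infinity_ennreal_def using top.not_eq_extremum by blast
  then have "{\<infinity>} \<subseteq> {x. T_at T x > ennreal y}" for y by simp
  moreover have "{x. T_at T x > ennreal y} \<in> sets \<mu>" for y
    using assms(2) stopping_lawD(3)[OF assms(1)] by measurable
  ultimately have tail: "emeasure \<mu> {\<infinity>} \<le> emeasure \<mu> {x. T_at T x > ennreal y}" for y
    by (rule emeasure_mono)
  have "(\<integral>\<^sup>+ y. emeasure \<mu> {\<infinity>} * indicator {0..} (y::real) \<partial>lborel) \<le> revenue \<mu> T"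
    unfolding revenue_def using tail by (intro nn_integral_mono mult_right_mono) auto
  moreover have "(\<integral>\<^sup>+ y. emeasure \<mu> {\<infinity>} * indicator {0..} (y::real) \<partial>lborel) = \<infinity>"
    using assms(4) by (simp add: nn_integral_cmult_indicator emeasure_lborel_Ici_infinite emeasure_eq_measure
        ennreal_mult_top)
  ultimately show False using assms(3) by simp
qed

lemma measure_top_eq:
  assumes "stopping_law \<mu>"
  shows "measure \<mu> {\<infinity>} = 1 - measure \<mu> {x. x < \<infinity>}"
proof -
  have "UNIV - {x. x < \<infinity>} = {\<infinity>::ennreal}" by (auto simp: less_top)
  then show ?thesis
    using prob_space.prob_compl[OF stopping_lawD(1)[OF assms], of "{x. x < \<infinity>}"] stopping_lawD(3,4)[OF assms]
    by simp
qed

lemma measure_top_le_Ioi: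
  assumes "stopping_law \<mu>"
  shows "measure \<mu> {\<infinity>} \<le> measure \<mu> {ennreal s<..}"
  using stopping_lawD(3)[OF assms] by (intro finite_measure.finite_measure_mono stopping_lawD(2)[OF assms]) auto

lemma cond_prob_finite_lt_one:
  assumes "stopping_law \<mu>" "0 < measure \<mu> {\<infinity>}"
  shows "cond_prob \<mu> {x. x < \<infinity>} s < 1"
proof -
  interpret prob_space \<mu> using stopping_lawD(1)[OF assms(1)] .
  have "measure \<mu> ({x. x < \<infinity>} \<inter> {ennreal s<..}) + measure \<mu> {\<infinity>}
      = measure \<mu> (({x. x < \<infinity>} \<inter> {ennreal s<..}) \<union> {\<infinity>})"
    using stopping_lawD(3)[OF assms(1)] by (intro finite_measure_Union[symmetric]) auto
  also have "\<dots> \<le> measure \<mu> {ennreal s<..}"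
    using stopping_lawD(3)[OF assms(1)] by (intro finite_measure_mono) auto
  finally have "measure \<mu> ({x. x < \<infinity>} \<inter> {ennreal s<..}) < measure \<mu> {ennreal s<..}"
    using assms(2) by linarith
  moreover from this have "0 < measure \<mu> {ennreal s<..}" by (metis le_less_trans measure_nonneg)
  ultimately show ?thesis unfolding cond_prob_def by simp
qed

lemma T_at_top_approx:
  assumes "payment_fn T" "T_at T \<infinity> = ennreal S" "0 < \<epsilon>"
  obtains m where "0 < m" "S < T m + \<epsilon>"
proof (cases "S < \<epsilon>")
  case True
  then show ?thesis using that[of 1] payment_fn_nonneg[OF assms(1), of 1] by simp
next
  case False
  then have "ennreal (S - \<epsilon>) < T_at T \<infinity>" using assms(2,3) by (simp add: ennreal_lessI)
  then obtain t where "0 \<le> t" "ennreal (S - \<epsilon>) < ennreal (T t)"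
    unfolding T_at_def by (auto simp: less_SUP_iff)
  then have "S - \<epsilon> < T t" using False by (subst (asm) ennreal_less_iff) auto
  moreover have "T t \<le> T (max t 1)" using \<open>0 \<le> t\<close> by (intro payment_fn_mono[OF assms(1)]) auto
  ultimately show ?thesis using that[of "max t 1"] by simp
qed

lemma T_at_capped_upfront_ge:
  assumes "payment_fn T" "0 < m" "0 \<le> \<epsilon>" "T_at T \<infinity> \<le> ennreal (T m + \<epsilon>)"
  shows "T_at T x \<le> T_at (add_upfront T \<epsilon>) (min x (ennreal m))"
proof (cases "x = 0")
  case True
  then show ?thesis using T_at_ennreal[of 0 T] payment_fn_zero[OF assms(1)] by simp
next
  case False
  define t where "t = enn2real (min x (ennreal m))"
  have "min x (ennreal m) < \<top>" using ennreal_less_top[of m] by (rule le_less_trans[rotated]) simp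
  then have xm: "min x (ennreal m) = ennreal t" unfolding t_def by simp
  have "0 < min x (ennreal m)" using False assms(2) by (simp add: zero_less_iff_neq_zero)
  then have "0 < t" using xm by simp
  then have rhs: "T_at (add_upfront T \<epsilon>) (min x (ennreal m)) = ennreal (T t + \<epsilon>)"
    using xm by (simp add: add_upfront_def)
  show ?thesis
  proof (cases "x \<le> ennreal m")
    case True
    then have "T_at T x = ennreal (T t)" using xm \<open>0 < t\<close> by simp
    then show ?thesis using rhs assms(3) by (simp add: ennreal_leI)
  next
    case False
    then have "ennreal t = ennreal m" using xm by (simp add: min_def)
    then have "t = m" using \<open>0 < t\<close> assms(2) by (simp add: ennreal_inj)
    then show ?thesis using rhs T_at_le_top[of T x] assms(4) by simp
  qed
qed

lemma emeasure_capped_upfront_tail_ge: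
  assumes "stopping_law \<mu>" "payment_fn T" "0 < m" "0 \<le> \<epsilon>"
    and S: "T_at T \<infinity> = ennreal S" "0 \<le> S" "S \<le> T m + \<epsilon>"
  shows "emeasure \<mu> {x. T_at T x > ennreal y} + emeasure \<mu> {\<infinity>} * indicator {S..<T m + \<epsilon>} y
    \<le> emeasure (capped_law \<mu> m) {x. T_at (add_upfront T \<epsilon>) x > ennreal y}"
proof -
  let ?g = "\<lambda>x::ennreal. min x (ennreal m)" and ?T' = "add_upfront T \<epsilon>"
  have pT': "payment_fn ?T'" by (rule payment_fn_add_upfront[OF assms(2,4)])
  have "?g -` {x. T_at ?T' x > ennreal y} \<inter> space \<mu> \<in> sets \<mu>"
    by (rule measurable_sets[OF measurable_cap_stopping_law[OF assms(1)]]) (use pT' in measurable)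
  then have sets: "?g -` {x. T_at ?T' x > ennreal y} \<in> sets \<mu>"
    using stopping_lawD(4)[OF assms(1)] by simp
  have capped: "emeasure (capped_law \<mu> m) {x. T_at ?T' x > ennreal y}
      = emeasure \<mu> (?g -` {x. T_at ?T' x > ennreal y})"
    by (rule emeasure_capped_law[OF assms(1)]) (use pT' in measurable)
  show ?thesis
  proof (cases "y \<in> {S..<T m + \<epsilon>}")
    case True
    \<comment> \<open>here the old tail vanishes, while the new process still pays \<open>T m + \<epsilon>\<close> when \<open>\<tau> = \<infinity>\<close>\<close>
    have "T_at T x \<le> ennreal y" for x
      using T_at_le_top[of T x] S(1) True by (metis atLeastLessThan_iff ennreal_leI order_trans)
    then have "{x. T_at T x > ennreal y} = {}" by (simp add: not_less)
    moreover have "T_at ?T' (?g \<infinity>) = ennreal (T m + \<epsilon>)"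
      using assms(3) by (simp add: add_upfront_def)
    then have "{\<infinity>} \<subseteq> ?g -` {x. T_at ?T' x > ennreal y}"
      using True S(2) by (simp add: ennreal_lessI)
    then have "emeasure \<mu> {\<infinity>} \<le> emeasure \<mu> (?g -` {x. T_at ?T' x > ennreal y})"
      by (rule emeasure_mono) (rule sets)
    ultimately show ?thesis using True capped by simp
  next
    case False
    have "{x. T_at T x > ennreal y} \<subseteq> ?g -` {x. T_at ?T' x > ennreal y}"
      using T_at_capped_upfront_ge[OF assms(2-4)] S by (auto intro: less_le_trans)
    then show ?thesis using False capped emeasure_mono[OF _ sets] by simp
  qed
qed

lemma revenue_capped_upfront_ge:
  assumes "stopping_law \<mu>" "payment_fn T" "0 < m" "0 \<le> \<epsilon>"
    and S: "T_at T \<infinity> = ennreal S" "0 \<le> S" "S \<le> T m + \<epsilon>"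
  shows "revenue \<mu> T + emeasure \<mu> {\<infinity>} * ennreal (T m + \<epsilon> - S)
      \<le> revenue (capped_law \<mu> m) (add_upfront T \<epsilon>)"
proof -
  have "(\<lambda>y. (emeasure \<mu> {x. T_at T x > ennreal y} + emeasure \<mu> {\<infinity>} * indicator {S..<T m + \<epsilon>} y)
        * indicator {0..} y)
      = (\<lambda>y. emeasure \<mu> {x. T_at T x > ennreal y} * indicator {0..} y
        + emeasure \<mu> {\<infinity>} * indicator {S..<T m + \<epsilon>} (y::real))"
    using S(2) by (auto simp: fun_eq_iff indicator_def)
  then have "revenue \<mu> T + emeasure \<mu> {\<infinity>} * ennreal (T m + \<epsilon> - S)
      = (\<integral>\<^sup>+ y\<in>{0..}. emeasure \<mu> {x. T_at T x > ennreal y} + emeasure \<mu> {\<infinity>} * indicator {S..<T m + \<epsilon>} y \<partial>lborel)"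
    unfolding revenue_def using assms(1,2) S(3)
    by (simp add: nn_integral_add nn_integral_cmult_indicator)
  also have "\<dots> \<le> revenue (capped_law \<mu> m) (add_upfront T \<epsilon>)"
    unfolding revenue_def using emeasure_capped_upfront_tail_ge[OF assms]
    by (intro nn_integral_mono mult_right_mono) auto
  finally show ?thesis .
qed

theorem lemma2:
  fixes \<theta> lam :: real and wp wm :: "real \<Rightarrow> real"
    and \<mu> :: "ennreal measure" and T :: "real \<Rightarrow> real"
  assumes "\<theta> > 0" and "lam > 0" and "weighting wp" and "weighting wm"
    and "DIR_compatible \<theta> lam wp wm \<mu> T"
    and "measure \<mu> {x. x < \<infinity>} < 1"
  shows "\<not> optimal \<theta> lam wp wm \<mu> T"
proof
  assume opt: "optimal \<theta> lam wp wm \<mu> T"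
  have sl: "stopping_law \<mu>" and pT: "payment_fn T" using assms(5) unfolding DIR_compatible_def by auto
  interpret prob_space \<mu> using stopping_lawD(1)[OF sl] .
  have pinf: "0 < measure \<mu> {\<infinity>}" using measure_top_eq[OF sl] assms(6) by simp
  then have "revenue \<mu> T < \<infinity>"
    using DIR_compatible_revenue_finite[OF assms(2,4,5)] measure_top_le_Ioi[OF sl, of 0] by simp
  then have "T_at T \<infinity> < \<infinity>" by (rule T_at_top_finite[OF sl pT _ pinf])
  then obtain S where S: "T_at T \<infinity> = ennreal S" "0 \<le> S" by (cases "T_at T \<infinity>" rule: ennreal_cases) auto
  define \<epsilon> where "\<epsilon> = \<theta> * (1 - wp (cond_prob \<mu> {x. x < \<infinity>} 0)) / lam"
  have "0 < \<epsilon>"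
    using weighting_less_one[OF assms(3) cond_prob_nonneg cond_prob_finite_lt_one[OF sl pinf]] assms(1,2)
    by (simp add: \<epsilon>_def)
  then obtain m where "0 < m" "S < T m + \<epsilon>" by (rule T_at_top_approx[OF pT S(1)])
  have "DIR_compatible \<theta> lam wp wm (capped_law \<mu> m) (add_upfront T \<epsilon>)"
    using \<open>0 < \<epsilon>\<close> assms(2) by (intro DIR_compatible_capped_upfront[OF assms(1-5) \<open>0 < m\<close>]) (auto simp: \<epsilon>_def)
  have "revenue \<mu> T < revenue \<mu> T + emeasure \<mu> {\<infinity>} * ennreal (T m + \<epsilon> - S)"
    using \<open>revenue \<mu> T < \<infinity>\<close> pinf \<open>S < T m + \<epsilon>\<close> ennreal_add_left_cancel_less[of "revenue \<mu> T" 0]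
    by (simp add: emeasure_eq_measure ennreal_zero_less_mult_iff less_top)
  also have "\<dots> \<le> revenue (capped_law \<mu> m) (add_upfront T \<epsilon>)"
    using \<open>0 < \<epsilon>\<close> \<open>S < T m + \<epsilon>\<close> by (intro revenue_capped_upfront_ge[OF sl pT \<open>0 < m\<close> _ S]) auto
  also have "\<dots> \<le> revenue \<mu> T"
    using opt \<open>DIR_compatible \<theta> lam wp wm (capped_law \<mu> m) (add_upfront T \<epsilon>)\<close> unfolding optimal_def by blast
  finally show False by simp
qed

end
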